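(* Let $\mathfrak{n}$ be the real $7$-dimensional Lie algebra with basis $e_1,\dots,e_7$ whose nonzero brackets (up to antisymmetry) are $[e_1,e_2]=e_4$, $[e_1,e_4]=e_5$, $[e_1,e_5]=e_7$, $[e_2,e_3]=e_6+e_7$, $[e_2,e_4]=e_6$. Then $\mathfrak{n}$ is an Einstein nilradical.
   Context: A real nilpotent Lie algebra $\mathfrak{n}$ is called an Einstein nilradical if it admits an inner product such that the left-invariant Riemannian metric it defines on the simply connected nilpotent Lie group with Lie algebra $\mathfrak{n}$ is a nilsoliton, i.e. its Ricci operator satisfies $\mathrm{Ric}=c\,\mathrm{Id}+D$ for some $c\in\mathbb{R}$ and some derivation $D$ of $\mathfrak{n}$. Brackets of basis elements not listed are zero. *)

theory Defs
  imports Main Complex_Main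
begin

(* Conventions: an n-dimensional real Lie algebra is given by structure constants
   sc i j k (indices in {1..n}) w.r.t. a basis e_1..e_n, i.e. [e_i,e_j] = sum_k sc i j k e_k.
   Vectors are coordinate functions nat => real (only coordinates 1..n matter). *)

definition lie_bracket :: "nat \<Rightarrow> (nat \<Rightarrow> nat \<Rightarrow> nat \<Rightarrow> real) \<Rightarrow> (nat \<Rightarrow> real) \<Rightarrow> (nat \<Rightarrow> real) \<Rightarrow> (nat \<Rightarrow> real)" where
  "lie_bracket n sc x y = (\<lambda>k. \<Sum>i\<in>{1..n}. \<Sum>j\<in>{1..n}. x i * y j * sc i j k)"

definition lin_indep_family :: "nat \<Rightarrow> (nat \<Rightarrow> nat \<Rightarrow> real) \<Rightarrow> bool" where
  "lin_indep_family n u \<longleftrightarrow>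
     (\<forall>a. (\<forall>k\<in>{1..n}. (\<Sum>i\<in>{1..n}. a i * u i k) = 0) \<longrightarrow> (\<forall>i\<in>{1..n}. a i = 0))"

(* Metric Lie algebra described in an orthonormal basis u_1..u_n with structure
   constants C: [u_a,u_b] = sum_c C a b c u_c.
   Levi-Civita connection (Koszul formula for left-invariant fields):
   <nabla_{u_i} u_j, u_k> = 1/2 (<[u_i,u_j],u_k> - <[u_j,u_k],u_i> + <[u_k,u_i],u_j>) *)
definition lc_coef :: "(nat \<Rightarrow> nat \<Rightarrow> nat \<Rightarrow> real) \<Rightarrow> nat \<Rightarrow> nat \<Rightarrow> nat \<Rightarrow> real" where
  "lc_coef C i j k = (C i j k - C j k i + C k i j) / 2"

(* Curvature R(X,Y) = nabla_X nabla_Y - nabla_Y nabla_X - nabla_[X,Y];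
   R(u_i,u_j) u_l = sum_m curv_coef n C i j l m u_m *)
definition curv_coef :: "nat \<Rightarrow> (nat \<Rightarrow> nat \<Rightarrow> nat \<Rightarrow> real) \<Rightarrow> nat \<Rightarrow> nat \<Rightarrow> nat \<Rightarrow> nat \<Rightarrow> real" where
  "curv_coef n C i j l m =
     (\<Sum>k\<in>{1..n}. lc_coef C j l k * lc_coef C i k m - lc_coef C i l k * lc_coef C j k m)
     - (\<Sum>k\<in>{1..n}. C i j k * lc_coef C k l m)"

(* Ricci tensor ric(X,Y) = tr (Z \<mapsto> R(Z,X)Y), evaluated on u_a, u_b.
   In the orthonormal basis this is also the matrix of the Ricci operator Ric:
   Ric u_a = sum_b ric_coef n C a b u_b. *)
definition ric_coef :: "nat \<Rightarrow> (nat \<Rightarrow> nat \<Rightarrow> nat \<Rightarrow> real) \<Rightarrow> nat \<Rightarrow> nat \<Rightarrow> real" where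
  "ric_coef n C a b = (\<Sum>i\<in>{1..n}. curv_coef n C i a b i)"

(* D u_a = sum_b D a b u_b is a derivation: D[u_a,u_b] = [D u_a,u_b] + [u_a, D u_b] *)
definition is_derivation :: "nat \<Rightarrow> (nat \<Rightarrow> nat \<Rightarrow> nat \<Rightarrow> real) \<Rightarrow> (nat \<Rightarrow> nat \<Rightarrow> real) \<Rightarrow> bool" where
  "is_derivation n C D \<longleftrightarrow>
     (\<forall>a\<in>{1..n}. \<forall>b\<in>{1..n}. \<forall>d\<in>{1..n}.
        (\<Sum>c\<in>{1..n}. C a b c * D c d)
        = (\<Sum>e\<in>{1..n}. D a e * C e b d) + (\<Sum>e\<in>{1..n}. D b e * C a e d))"

definition is_nilsoliton_onb :: "nat \<Rightarrow> (nat \<Rightarrow> nat \<Rightarrow> nat \<Rightarrow> real) \<Rightarrow> bool" where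
  "is_nilsoliton_onb n C \<longleftrightarrow>
     (\<exists>c D. is_derivation n C D \<and>
        (\<forall>a\<in>{1..n}. \<forall>b\<in>{1..n}. ric_coef n C a b = c * (if a = b then 1 else 0) + D a b))"

(* Einstein nilradical: there is an inner product, i.e. a basis u_1..u_n declared
   orthonormal, for which the metric is a nilsoliton. *)
definition einstein_nilradical :: "nat \<Rightarrow> (nat \<Rightarrow> nat \<Rightarrow> nat \<Rightarrow> real) \<Rightarrow> bool" where
  "einstein_nilradical n sc \<longleftrightarrow>
     (\<exists>u C. lin_indep_family n u \<and>
        (\<forall>a\<in>{1..n}. \<forall>b\<in>{1..n}. \<forall>k\<in>{1..n}.
            lie_bracket n sc (u a) (u b) k = (\<Sum>c\<in>{1..n}. C a b c * u c k)) \<and>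
        is_nilsoliton_onb n C)"

definition n7_pos :: "(nat \<times> nat \<times> nat) set" where
  "n7_pos = {(1,2,4), (1,4,5), (1,5,7), (2,3,6), (2,3,7), (2,4,6)}"

definition n7_sc :: "nat \<Rightarrow> nat \<Rightarrow> nat \<Rightarrow> real" where
  "n7_sc i j k = (if (i,j,k) \<in> n7_pos then 1 else if (j,i,k) \<in> n7_pos then -1 else 0)"

end

theory Submission
  imports Defs
begin

text \<open>The nilsoliton derivation is the grading derivation with eigenvalues proportional to
  \<open>(1,2,3,3,4,5,5)\<close> on \<open>e\<^sub>1,\<dots>,e\<^sub>7\<close>. Rescaling the \<open>e\<^sub>i\<close>
  and shearing \<open>e\<^sub>3\<close> into \<open>e\<^sub>4\<close> and \<open>e\<^sub>6\<close> into
  \<open>e\<^sub>7\<close> (a triangular change of basis preserving the grading) gives a basis which,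
  declared orthonormal, has Ricci operator \<open>-445 Id + 115 diag(1,2,3,3,4,5,5)\<close>.\<close>

lemma lin_indep_family_upper_triangular:
  assumes lower_zero: "\<And>i k. i \<in> {1..n} \<Longrightarrow> k \<in> {1..n} \<Longrightarrow> k < i \<Longrightarrow> u i k = 0"
    and diag_nonzero: "\<And>i. i \<in> {1..n} \<Longrightarrow> u i i \<noteq> 0"
  shows "lin_indep_family n u"
  unfolding lin_indep_family_def
proof (intro allI impI)
  fix a :: "nat \<Rightarrow> real"
  assume comb_zero: "\<forall>k\<in>{1..n}. (\<Sum>i\<in>{1..n}. a i * u i k) = 0"
  have "a i = 0" if "i \<in> {1..n}" for i
    using that
  proof (induction i rule: less_induct)
    case (less i)
    have "(\<Sum>j\<in>{1..n} - {i}. a j * u j i) = 0"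
    proof (rule sum.neutral, intro ballI)
      fix j assume j: "j \<in> {1..n} - {i}"
      show "a j * u j i = 0"
      proof (cases "j < i")
        case True
        with j less.IH show ?thesis by simp
      next
        case False
        with j less.prems lower_zero show ?thesis by simp
      qed
    qed
    then have "(\<Sum>j\<in>{1..n}. a j * u j i) = a i * u i i"
      using less.prems by (simp add: sum.remove)
    with comb_zero less.prems diag_nonzero show "a i = 0" by simp
  qed
  then show "\<forall>i\<in>{1..n}. a i = 0" by blast
qed

lemma is_derivation_diagonal_iff:
  "is_derivation n C (\<lambda>a b. if a = b then w a else 0) \<longleftrightarrow>
     (\<forall>a\<in>{1..n}. \<forall>b\<in>{1..n}. \<forall>c\<in>{1..n}. C a b c * w c = (w a + w b) * C a b c)"
proof -
  have sum_delta_eq: "(\<Sum>e\<in>A. f e * (if x = e then w x else 0)) = (if x \<in> A then f x * w x else 0)"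
    if "finite A" for A and x and f :: "nat \<Rightarrow> real"
    using that by (simp add: if_distrib[of "\<lambda>t. _ * t"] cong: if_cong)
  have sum_eq_delta: "(\<Sum>c\<in>A. f c * (if c = x then w c else 0)) = (if x \<in> A then f x * w x else 0)"
    if "finite A" for A and x and f :: "nat \<Rightarrow> real"
    using that by (simp add: if_distrib[of "\<lambda>t. _ * t"] cong: if_cong)
  show ?thesis
    unfolding is_derivation_def by (simp add: sum_delta_eq sum_eq_delta algebra_simps)
qed

lemma sqrt_mult_sqrt_left: "0 \<le> c \<Longrightarrow> sqrt c * (sqrt c * x) = c * x"
  by (simp add: mult.assoc[symmetric])

lemma atLeastAtMost_1_7: "{1..7::nat} = {1,2,3,4,5,6,7}"
  by auto

definition n7_onb_sc_upper :: "nat \<Rightarrow> nat \<Rightarrow> nat \<Rightarrow> real" where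
  "n7_onb_sc_upper i j k =
     (if (i,j,k) = (1,2,4) then 5 * sqrt 2 * sqrt 3
      else if (i,j,k) = (1,3,5) then - 6 * sqrt 2
      else if (i,j,k) = (1,4,5) then 3 * sqrt 2 * sqrt 11
      else if (i,j,k) = (1,5,7) then 4 * sqrt 3 * sqrt 5
      else if (i,j,k) = (2,3,6) then 3 * sqrt 13
      else if (i,j,k) = (2,3,7) then sqrt 11
      else if (i,j,k) = (2,4,6) then sqrt 11 * sqrt 13
      else if (i,j,k) = (2,4,7) then - 3
      else 0)"

definition n7_onb_sc :: "nat \<Rightarrow> nat \<Rightarrow> nat \<Rightarrow> real" where
  "n7_onb_sc i j k = n7_onb_sc_upper i j k - n7_onb_sc_upper j i k"

text \<open>Row \<open>a\<close> holds the \<open>e\<close>-coordinates of the \<open>a\<close>-th orthonormal basis vector.\<close>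

definition n7_onb :: "nat \<Rightarrow> nat \<Rightarrow> real" where
  "n7_onb a k =
     (if (a,k) = (1,1) then 1
      else if (a,k) = (2,2) then sqrt 2 * sqrt 3 * sqrt 5 * sqrt 11 / 990
      else if (a,k) = (3,3) then sqrt 5 / 990
      else if (a,k) = (3,4) then - (sqrt 5 / 2475)
      else if (a,k) = (4,4) then sqrt 5 * sqrt 11 / 4950
      else if (a,k) = (5,5) then sqrt 2 * sqrt 5 / 29700
      else if (a,k) = (6,6) then sqrt 2 * sqrt 3 * sqrt 11 * sqrt 13 / 12741300
      else if (a,k) = (6,7) then sqrt 2 * sqrt 3 * sqrt 11 * sqrt 13 / 16988400
      else if (a,k) = (7,7) then sqrt 2 * sqrt 3 / 356400
      else 0)"

definition n7_degree :: "nat \<Rightarrow> real" where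
  "n7_degree a =
     (if a = 1 then 1 else if a = 2 then 2 else if a \<in> {3,4} then 3 else if a = 5 then 4 else 5)"

lemma n7_onb_lin_indep: "lin_indep_family 7 n7_onb"
  by (rule lin_indep_family_upper_triangular) (auto simp: n7_onb_def atLeastAtMost_1_7)

lemma n7_onb_brackets:
  "\<forall>a\<in>{1..7}. \<forall>b\<in>{1..7}. \<forall>k\<in>{1..7}.
     lie_bracket 7 n7_sc (n7_onb a) (n7_onb b) k = (\<Sum>c\<in>{1..7}. n7_onb_sc a b c * n7_onb c k)"
  unfolding lie_bracket_def atLeastAtMost_1_7 n7_onb_sc_def n7_onb_sc_upper_def n7_onb_def
    n7_sc_def n7_pos_def
  by (simp add: algebra_simps sqrt_mult_sqrt_left)

lemma n7_grading_derivation: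
  "is_derivation 7 n7_onb_sc (\<lambda>a b. if a = b then 115 * n7_degree a else 0)"
  unfolding is_derivation_diagonal_iff atLeastAtMost_1_7 n7_onb_sc_def n7_onb_sc_upper_def
    n7_degree_def
  by simp

lemma n7_onb_ricci:
  "\<forall>a\<in>{1..7}. \<forall>b\<in>{1..7}.
     ric_coef 7 n7_onb_sc a b
       = -445 * (if a = b then 1 else 0) + (if a = b then 115 * n7_degree a else 0)"
  unfolding ric_coef_def curv_coef_def lc_coef_def atLeastAtMost_1_7 n7_onb_sc_def
    n7_onb_sc_upper_def n7_degree_def
  by (simp add: algebra_simps sqrt_mult_sqrt_left)

theorem mainTheorem14:
  shows "einstein_nilradical 7 n7_sc"
  unfolding einstein_nilradical_def is_nilsoliton_onb_def
  using n7_onb_lin_indep n7_onb_brackets n7_grading_derivation n7_onb_ricci by blast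

end
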